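(* Define, as formal power series in $q$ with coefficients polynomial in $a$ (or as analytic functions for $|q|<1$), $$F_1(a)=\sum_{n\ge0}\frac{a^{2n}q^{2n(n+1)}(q;q^2)_n(-aq^{2n+2};q)_\infty}{(q^2;q^2)_n},\quad F_2(a)=(-aq;q)_\infty,\quad F_3(a)=\sum_{n\ge0}\frac{a^{2n}q^{2n^2}(q;q^2)_n(-aq^{2n+1};q)_\infty}{(q^2;q^2)_n}.$$ Then $F_1(a)=F_3(aq)$, $F_2(a)=(1+aq)F_2(aq)$, and $F_3(a)=F_1(a)+aq(1+aq)F_1(aq)$.
   Context: $(x;q)_n=\prod_{h=0}^{n-1}(1-xq^h)$, $(x;q)_0=1$, and $(x;q)_\infty=\prod_{h\ge0}(1-xq^h)$. *)

theory Defs
  imports "HOL-Analysis.Analysis"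
begin

definition qpoch :: "complex \<Rightarrow> complex \<Rightarrow> nat \<Rightarrow> complex" where
  "qpoch x q n = (\<Prod>h<n. 1 - x * q ^ h)"

definition qpoch_inf :: "complex \<Rightarrow> complex \<Rightarrow> complex" where
  "qpoch_inf x q = (\<Prod>h. 1 - x * q ^ h)"

definition F1 :: "complex \<Rightarrow> complex \<Rightarrow> complex" where
  "F1 q a = (\<Sum>n. a ^ (2*n) * q ^ (2*n*(n+1)) * qpoch q (q^2) n
              * qpoch_inf (- a * q ^ (2*n+2)) q / qpoch (q^2) (q^2) n)"

definition F2 :: "complex \<Rightarrow> complex \<Rightarrow> complex" where
  "F2 q a = qpoch_inf (- a * q) q"

definition F3 :: "complex \<Rightarrow> complex \<Rightarrow> complex" where
  "F3 q a = (\<Sum>n. a ^ (2*n) * q ^ (2*n^2) * qpoch q (q^2) n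
              * qpoch_inf (- a * q ^ (2*n+1)) q / qpoch (q^2) (q^2) n)"

end

theory Submission
  imports Defs
begin

text \<open>
  The first two identities are direct: \<open>F1 a\<close> equals \<open>F3 (a q)\<close> term by term, and the
  first factor of the infinite product \<open>F2\<close> splits off.

  For the third, let \<open>D a = F3 a - F3 (a q) - a q (1 + a q) F3 (a q^2)\<close>. After splitting
  off factors so that all three series share the same infinite product, the part of the
  \<open>n\<close>-th summand that vanishes at \<open>n = 0\<close> can be moved to the \<open>(n+1)\<close>-st summand
  (a telescoping sum), giving \<open>D a = \<Sum>n. X n a - Y n a\<close>. Moving \<open>X\<close> by one index once
  more gives \<open>X (n+1) a - Y n a = a^2 q^3 (X n (a q^2) - Y n (a q^2))\<close>, hence the functional
  equation \<open>D a = a^2 q^3 D (a q^2)\<close>. Since \<open>D\<close> is bounded on the unit disc, iterating the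
  equation forces \<open>D = 0\<close> there, and then everywhere because \<open>a q^(2k)\<close> eventually enters
  the disc.
\<close>

lemma power_numeral_mult: "(q::'a::monoid_mult) ^ (numeral k * n) = (q ^ n) ^ numeral k"
  by (metis mult.commute power_mult)

lemma power_numeral_commute: "((q::'a::monoid_mult) ^ numeral k) ^ n = (q ^ n) ^ numeral k"
  by (metis mult.commute power_mult)

lemma zero_if_bounded_and_contracting:
  fixes f g :: "'a::real_normed_div_algebra \<Rightarrow> 'a"
  assumes p: "norm p < 1" and "\<theta> < 1"
    and feq: "\<And>b. f b = g b * f (b * p)"
    and g: "\<And>b. norm b \<le> 1 \<Longrightarrow> norm (g b) \<le> \<theta>"
    and f: "\<And>b. norm b \<le> 1 \<Longrightarrow> norm (f b) \<le> B"
  shows "f b = 0"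
proof -
  have \<theta>: "0 \<le> \<theta>"
    using order_trans[OF norm_ge_zero g[of 0]] by simp
  have shrink: "norm (b * p) \<le> 1" if "norm b \<le> 1" for b
    using that p by (simp add: norm_mult mult_le_one)
  have decay: "norm (f b) \<le> \<theta> ^ k * B" if "norm b \<le> 1" for b k
    using that
  proof (induction k arbitrary: b)
    case (Suc k)
    have "norm (f b) = norm (g b) * norm (f (b * p))"
      by (subst feq) (simp add: norm_mult)
    also have "\<dots> \<le> \<theta> * (\<theta> ^ k * B)"
      using Suc shrink \<theta> by (intro mult_mono g) auto
    finally show ?case
      by simp
  qed (simp add: f)
  have disc: "f b = 0" if "norm b \<le> 1" for b
  proof -
    have "(\<lambda>k. \<theta> ^ k * B) \<longlonglongrightarrow> 0 * B"
      using \<theta> \<open>\<theta> < 1\<close> by (intro tendsto_mult_right LIMSEQ_power_zero) auto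
    then have "norm (f b) \<le> 0"
      using decay[OF that] by (intro LIMSEQ_le_const) auto
    then show ?thesis
      by simp
  qed
  have reach: "f b = 0" if "norm (b * p ^ k) \<le> 1" for k
    using that
  proof (induction k arbitrary: b)
    case (Suc k)
    then have "f (b * p) = 0"
      by (simp add: mult.assoc)
    then show ?case
      by (subst feq) simp
  qed (simp add: disc)
  have "(\<lambda>k. b * p ^ k) \<longlonglongrightarrow> 0"
    using tendsto_mult_left[OF LIMSEQ_power_zero[OF p], of b] by simp
  from LIMSEQ_D[OF this zero_less_one] obtain k where "norm (b * p ^ k) \<le> 1"
    by (metis diff_zero less_imp_le order.refl)
  then show ?thesis
    by (rule reach)
qed

lemma convergent_prod_qpoch:
  fixes q x :: complex
  assumes "norm q < 1"
  shows "convergent_prod (\<lambda>h. 1 - x * q ^ h)"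
proof -
  have "summable (\<lambda>h. norm x * norm q ^ h)"
    using assms by (intro summable_mult summable_geometric) auto
  then have "summable (\<lambda>h. norm ((1 - x * q ^ h) - 1))"
    by (simp add: norm_mult norm_power)
  then show ?thesis
    by (intro abs_convergent_prod_imp_convergent_prod summable_imp_abs_convergent_prod)
qed

lemma qpoch_inf_unroll:
  fixes q x :: complex
  assumes "norm q < 1"
  shows "qpoch_inf x q = (1 - x) * qpoch_inf (x * q) q"
proof -
  have "(\<lambda>h. 1 - x * q ^ h) has_prod ((\<Prod>h<1. 1 - x * q ^ h) * (\<Prod>h. 1 - x * q ^ (h + 1)))"
    by (rule has_prod_ignore_initial_segment'[OF convergent_prod_qpoch[OF assms]])
  moreover have "(\<lambda>h. 1 - x * q ^ (h + 1)) = (\<lambda>h. 1 - x * q * q ^ h)"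
    by (simp add: algebra_simps)
  ultimately show ?thesis
    unfolding qpoch_inf_def has_prod_iff by simp
qed

lemma qpoch_inf_neg_power_unroll:
  fixes q b :: complex
  assumes "norm q < 1"
  shows "qpoch_inf (- b * q ^ m) q = (1 + b * q ^ m) * qpoch_inf (- b * q ^ (m + 1)) q"
  using qpoch_inf_unroll[OF assms, of "- b * q ^ m"] by (simp add: mult_ac)

lemma norm_qpoch_inf_le:
  fixes q x :: complex
  assumes "norm q < 1"
  shows "norm (qpoch_inf x q) \<le> exp (norm x / (1 - norm q))"
proof -
  have "norm (\<Prod>h\<le>n. 1 - x * q ^ h) \<le> exp (norm x / (1 - norm q))" for n
  proof -
    have "norm (\<Prod>h\<le>n. 1 - x * q ^ h) \<le> (\<Prod>h\<le>n. 1 + norm x * norm q ^ h)"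
      unfolding prod_norm[symmetric]
      by (intro prod_mono conjI norm_ge_zero order.trans[OF norm_triangle_ineq4])
         (simp add: norm_mult norm_power)
    also have "\<dots> \<le> exp (\<Sum>h\<le>n. norm x * norm q ^ h)"
      by (intro prod_le_exp_sum) simp
    also have "(\<Sum>h\<le>n. norm x * norm q ^ h) \<le> (\<Sum>h. norm x * norm q ^ h)"
      using assms by (intro sum_le_suminf summable_mult summable_geometric) auto
    also have "(\<Sum>h. norm x * norm q ^ h) = norm x / (1 - norm q)"
      using assms by (simp add: suminf_mult suminf_geometric divide_simps)
    finally show ?thesis by simp
  qed
  moreover have "(\<lambda>n. norm (\<Prod>h\<le>n. 1 - x * q ^ h)) \<longlonglongrightarrow> norm (qpoch_inf x q)"
    unfolding qpoch_inf_def
    by (intro tendsto_norm convergent_prod_LIMSEQ convergent_prod_qpoch assms)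
  ultimately show ?thesis
    by (intro LIMSEQ_le_const2) auto
qed

lemma norm_qpoch_le:
  fixes q x :: complex
  assumes "norm q \<le> 1"
  shows "norm (qpoch x q n) \<le> (1 + norm x) ^ n"
proof -
  have "norm (1 - x * q ^ h) \<le> 1 + norm x" for h
  proof -
    have "norm x * norm q ^ h \<le> norm x"
      using assms by (simp add: mult_left_le power_le_one)
    then show ?thesis
      using norm_triangle_ineq4[of 1 "x * q ^ h"] by (simp add: norm_mult norm_power)
  qed
  then have "(\<Prod>h<n. norm (1 - x * q ^ h)) \<le> (\<Prod>h<n. 1 + norm x)"
    by (intro prod_mono) auto
  then show ?thesis
    unfolding qpoch_def prod_norm[symmetric] by simp
qed

lemma norm_qpoch_ge:
  fixes q x :: complex
  assumes "norm x \<le> 1" "norm q \<le> 1"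
  shows "(1 - norm x) ^ n \<le> norm (qpoch x q n)"
proof -
  have "1 - norm x \<le> norm (1 - x * q ^ h)" for h
  proof -
    have "norm x * norm q ^ h \<le> norm x"
      using assms by (simp add: mult_left_le power_le_one)
    then show ?thesis
      using norm_triangle_ineq3[of 1 "x * q ^ h"] by (simp add: norm_mult norm_power)
  qed
  then have "(\<Prod>h<n. 1 - norm x) \<le> (\<Prod>h<n. norm (1 - x * q ^ h))"
    using assms(1) by (intro prod_mono) auto
  then show ?thesis
    unfolding qpoch_def prod_norm[symmetric] by simp
qed

definition qweight :: "complex \<Rightarrow> nat \<Rightarrow> complex" where
  "qweight q n = q ^ (2 * n^2) * qpoch q (q^2) n / qpoch (q^2) (q^2) n"

lemma qweight_Suc:
  "qweight q (Suc n) = qweight q n * q^2 * (q ^ n) ^ 4 * (1 - q * (q ^ n)^2) / (1 - q^2 * (q ^ n)^2)"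
proof -
  have "2 * (Suc n)^2 = 2 * n^2 + (4 * n + 2)"
    by (simp add: power2_eq_square)
  then have "q ^ (2 * (Suc n)^2) = q ^ (2 * n^2) * (q^2 * (q ^ n) ^ 4)"
    by (simp add: power_add power_numeral_mult power2_eq_square)
  moreover have "qpoch x (q^2) (Suc n) = qpoch x (q^2) n * (1 - x * (q ^ n)^2)" for x
    unfolding qpoch_def by (simp add: power_numeral_commute)
  ultimately show ?thesis
    unfolding qweight_def by (simp add: mult_ac)
qed

lemma one_minus_qpower_nonzero:
  fixes q :: complex
  assumes q: "norm q < 1"
  shows "1 - q^2 * (q ^ n)^2 \<noteq> 0"
proof -
  have "norm ((q ^ n)^2) \<le> 1"
    using q by (simp add: norm_power power_le_one)
  moreover have "norm (q^2) < 1"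
    using q by (simp add: norm_power power_less_one_iff)
  ultimately have "norm (q^2 * (q ^ n)^2) < 1"
    unfolding norm_mult by (metis mult_left_le norm_ge_zero order_le_less_trans)
  then show ?thesis
    by auto
qed

lemma norm_qweight_le:
  fixes q :: complex
  assumes "norm q < 1"
  shows "norm (qweight q n) \<le> ((1 + norm q) / (1 - norm q)) ^ n * norm q ^ (2 * n^2)"
proof -
  have q1: "norm q \<le> 1" "norm (q^2) \<le> 1"
    using assms by (auto simp: norm_power power_le_one)
  have "norm (q^2) \<le> norm q"
    using q1 by (simp add: norm_mult power2_eq_square mult_left_le)
  then have "(1 - norm q) ^ n \<le> (1 - norm (q^2)) ^ n"
    using q1 by (intro power_mono) auto
  also have "\<dots> \<le> norm (qpoch (q^2) (q^2) n)"
    using norm_qpoch_ge[OF q1(2) q1(2)] .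
  finally have den: "(1 - norm q) ^ n \<le> norm (qpoch (q^2) (q^2) n)" .
  have num: "norm (qpoch q (q^2) n) \<le> (1 + norm q) ^ n"
    using norm_qpoch_le[OF q1(2)] .
  have "norm (qweight q n) = norm q ^ (2 * n^2) * norm (qpoch q (q^2) n) / norm (qpoch (q^2) (q^2) n)"
    unfolding qweight_def by (simp add: norm_mult norm_divide norm_power)
  also have "\<dots> \<le> norm q ^ (2 * n^2) * (1 + norm q) ^ n / (1 - norm q) ^ n"
    using assms num den by (intro frac_le mult_left_mono) auto
  finally show ?thesis
    by (simp add: power_divide mult_ac)
qed

definition qterm :: "complex \<Rightarrow> complex \<Rightarrow> (nat \<Rightarrow> complex) \<Rightarrow> (nat \<Rightarrow> complex) \<Rightarrow> nat \<Rightarrow> complex" where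
  "qterm q x u c n = x ^ n * u n * qweight q n * qpoch_inf (c n) q"

lemma norm_qterm_le:
  fixes q x :: complex
  assumes q: "norm q < 1" and x: "norm x \<le> X" and u: "norm (u n) \<le> M" and c: "norm (c n) \<le> \<rho>"
  shows "norm (qterm q x u c n)
    \<le> M * exp (\<rho> / (1 - norm q)) * ((X * (1 + norm q) / (1 - norm q)) ^ n * norm q ^ (2 * n^2))"
proof -
  have "norm (qpoch_inf (c n) q) \<le> exp (\<rho> / (1 - norm q))"
    using norm_qpoch_inf_le[OF q, of "c n"] c q
    by (meson divide_right_mono diff_ge_0_iff_ge exp_le_cancel_iff less_imp_le order_trans)
  then have "norm (qterm q x u c n)
      \<le> X ^ n * M * (((1 + norm q) / (1 - norm q)) ^ n * norm q ^ (2 * n^2)) * exp (\<rho> / (1 - norm q))"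
    unfolding qterm_def norm_mult norm_power
    using order.trans[OF norm_ge_zero x] order.trans[OF norm_ge_zero u] q
    by (intro mult_mono power_mono x u norm_qweight_le q) auto
  then show ?thesis
    by (simp only: times_divide_eq_right[symmetric] power_mult_distrib) (simp add: mult_ac)
qed

lemma summable_power_mult_gaussian:
  fixes r s :: real
  assumes "0 \<le> r" "0 \<le> s" "s < 1"
  shows "summable (\<lambda>n. r ^ n * s ^ (2 * n^2))"
proof -
  have "(\<lambda>n. r * (s^2) ^ n) \<longlonglongrightarrow> r * 0"
    using assms by (intro tendsto_intros) (auto simp: power_less_one_iff)
  then have "eventually (\<lambda>n. r * (s^2) ^ n < 1/2) sequentially"
    by (rule order_tendstoD) simp
  then obtain N where N: "\<And>n. n \<ge> N \<Longrightarrow> r * (s^2) ^ n \<le> 1/2"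
    unfolding eventually_sequentially by (meson less_imp_le)
  have "norm (r ^ n * s ^ (2 * n^2)) \<le> (1/2) ^ n" if "n \<ge> N" for n
  proof -
    have "r ^ n * s ^ (2 * n^2) = (r * (s^2) ^ n) ^ n"
      by (simp add: power_mult_distrib power_numeral_mult power2_eq_square power_mult)
    then show ?thesis
      using assms N[OF that] by (simp add: power_mono)
  qed
  moreover have "summable (\<lambda>n. (1/2::real) ^ n)"
    by (rule summable_geometric) simp
  ultimately show ?thesis
    by (blast intro: summable_comparison_test')
qed

lemma summable_qterm:
  fixes q x :: complex
  assumes q: "norm q < 1" and u: "convergent u" and c: "\<And>n. norm (c n) \<le> \<rho>"
  shows "summable (qterm q x u c)"
proof -
  obtain M where M: "\<And>n. norm (u n) \<le> M"
    using convergent_imp_Bseq[OF u] by (auto simp: Bseq_def)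
  have "summable (\<lambda>n. M * exp (\<rho> / (1 - norm q))
      * ((norm x * (1 + norm q) / (1 - norm q)) ^ n * norm q ^ (2 * n^2)))"
    using q by (intro summable_mult summable_power_mult_gaussian) auto
  then show ?thesis
    by (rule summable_comparison_test') (rule norm_qterm_le[OF q order.refl M c])
qed

lemma norm_neg_mult_power_le:
  fixes q b :: complex
  assumes "norm q \<le> 1"
  shows "norm (- b * q ^ m) \<le> norm b"
  using assms by (simp add: norm_mult norm_power mult_left_le power_le_one)

lemma F1_eq_F3: "F1 q a = F3 q (a * q)"
proof -
  have weight: "a ^ (2*n) * q ^ (2*n*(n+1)) = (a * q) ^ (2*n) * q ^ (2 * n^2)" for n
  proof -
    have "2 * n * (n + 1) = 2 * n + 2 * n^2"
      by (simp add: power2_eq_square algebra_simps)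
    then show ?thesis
      by (simp only: power_add power_mult_distrib mult.assoc)
  qed
  have shift: "- a * q ^ (2*n+2) = - (a * q) * q ^ (2*n+1)" for n
    by simp
  show ?thesis
    unfolding F1_def F3_def weight shift ..
qed

definition F3_term :: "complex \<Rightarrow> complex \<Rightarrow> nat \<Rightarrow> complex" where
  "F3_term q a = qterm q (a^2) (\<lambda>_. 1) (\<lambda>n. - a * q ^ (2*n+1))"

lemma F3_eq_suminf: "F3 q a = suminf (F3_term q a)"
  unfolding F3_def F3_term_def qterm_def qweight_def power_numeral_mult power_numeral_commute
  by (simp add: mult_ac)

lemma summable_F3_term:
  assumes q: "norm q < 1"
  shows "summable (F3_term q a)"
  unfolding F3_term_def
proof (rule summable_qterm[OF q convergent_const])
  show "norm (- a * q ^ (2*n+1)) \<le> norm a" for n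
    using q by (intro norm_neg_mult_power_le) auto
qed

lemma F3_bounded_on_unit_disc:
  fixes q :: complex
  assumes q: "norm q < 1"
  obtains C where "\<And>a. norm a \<le> 1 \<Longrightarrow> norm (F3 q a) \<le> C"
proof
  define r where "r = (1 + norm q) / (1 - norm q)"
  fix a :: complex
  assume a: "norm a \<le> 1"
  have "norm (a^2) \<le> 1"
    using a by (simp add: norm_power power_le_one)
  moreover have "norm (- a * q ^ (2*n+1)) \<le> 1" for n
    using q a norm_neg_mult_power_le[of q a "2*n+1"] by simp
  ultimately have "norm (F3_term q a n) \<le> 1 * exp (1 / (1 - norm q)) * ((1 * r) ^ n * norm q ^ (2 * n^2))" for n
    unfolding F3_term_def r_def times_divide_eq_right by (intro norm_qterm_le[OF q]) auto
  then have "norm (F3_term q a n) \<le> exp (1 / (1 - norm q)) * (r ^ n * norm q ^ (2 * n^2))" for n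
    by simp
  moreover have "summable (\<lambda>n. exp (1 / (1 - norm q)) * (r ^ n * norm q ^ (2 * n^2)))"
    using q unfolding r_def by (intro summable_mult summable_power_mult_gaussian) auto
  ultimately show "norm (F3 q a) \<le> (\<Sum>n. exp (1 / (1 - norm q)) * (r ^ n * norm q ^ (2 * n^2)))"
    unfolding F3_eq_suminf by (rule norm_suminf_le)
qed

definition F3_defect :: "complex \<Rightarrow> complex \<Rightarrow> complex" where
  "F3_defect q a = F3 q a - F3 q (a * q) - a * q * (1 + a * q) * F3 q (a * q^2)"

text \<open>
  The summand of \<open>F3_defect\<close> is \<open>defect_pos - defect_neg\<close>. The split is
  chosen so that \<open>defect_pos q b 0 = 0\<close> and shifting \<open>defect_pos\<close> by one index
  reproduces the same series at \<open>b q\<^sup>2\<close> (lemma \<open>defect_Suc\<close>).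
\<close>

definition defect_pos :: "complex \<Rightarrow> complex \<Rightarrow> nat \<Rightarrow> complex" where
  "defect_pos q b = qterm q (b^2 * q^2) (\<lambda>n. b * q * (1 - q ^ (2*n)) * (1 + b * q ^ (2*n+2) * (1 + q)))
     (\<lambda>n. - b * q ^ (2*n+4))"

definition defect_neg :: "complex \<Rightarrow> complex \<Rightarrow> nat \<Rightarrow> complex" where
  "defect_neg q b = qterm q (b^2 * q^2) (\<lambda>n. b^3 * q ^ (4*n+5) * (1 - q)) (\<lambda>n. - b * q ^ (2*n+4))"

lemma summable_defect_pos:
  assumes q: "norm q < 1"
  shows "summable (defect_pos q b)"
  unfolding defect_pos_def
proof (rule summable_qterm[OF q])
  show "convergent (\<lambda>n. b * q * (1 - q ^ (2*n)) * (1 + b * q ^ (2*n+2) * (1 + q)))"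
    unfolding power_add power_numeral_mult by (rule convergentI) (rule tendsto_intros q)+
  show "norm (- b * q ^ (2*n+4)) \<le> norm b" for n
    using q by (intro norm_neg_mult_power_le) auto
qed

lemma summable_defect_neg:
  assumes q: "norm q < 1"
  shows "summable (defect_neg q b)"
  unfolding defect_neg_def
proof (rule summable_qterm[OF q])
  show "convergent (\<lambda>n. b^3 * q ^ (4*n+5) * (1 - q))"
    unfolding power_add power_numeral_mult by (rule convergentI) (rule tendsto_intros q)+
  show "norm (- b * q ^ (2*n+4)) \<le> norm b" for n
    using q by (intro norm_neg_mult_power_le) auto
qed

lemma F3_term_decompose:
  fixes q a :: complex
  assumes q: "norm q < 1"
  defines "A \<equiv> qterm q (a^2) (\<lambda>n. 1 - q ^ (2*n)) (\<lambda>n. - a * q ^ (2*n+2))"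
  shows "F3_term q a n - F3_term q (a*q) n - a*q*(1 + a*q) * F3_term q (a*q^2) n
    = (A n - A (Suc n)) + (defect_pos q a n - defect_neg q a n)"
  \<comment> \<open>\<open>A 0 = 0\<close>, so the first part telescopes away when summed.\<close>
proof -
  define R where "R = qpoch_inf (- a * q ^ (2*n+4)) q"
  have exps: "2*n+1+1 = 2*n+2" "2*n+2+1 = 2*n+3" "2*n+3+1 = 2*n+(4::nat)" "2 * Suc n + 2 = 2*n+(4::nat)"
    by simp_all
  have r3: "qpoch_inf (- a * q ^ (2*n+3)) q = (1 + a * q ^ (2*n+3)) * R"
    using qpoch_inf_neg_power_unroll[OF q, of a "2*n+3"] unfolding exps R_def .
  have r2: "qpoch_inf (- a * q ^ (2*n+2)) q = (1 + a * q ^ (2*n+2)) * qpoch_inf (- a * q ^ (2*n+3)) q"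
    using qpoch_inf_neg_power_unroll[OF q, of a "2*n+2"] unfolding exps .
  have r1: "qpoch_inf (- a * q ^ (2*n+1)) q = (1 + a * q ^ (2*n+1)) * qpoch_inf (- a * q ^ (2*n+2)) q"
    using qpoch_inf_neg_power_unroll[OF q, of a "2*n+1"] unfolding exps .
  have args: "- (a*q) * q ^ (2*n+1) = - a * q ^ (2*n+2)" "- (a*q^2) * q ^ (2*n+1) = - a * q ^ (2*n+3)"
    by (simp_all add: power_add mult_ac numeral_eq_Suc)
  show ?thesis
    unfolding A_def F3_term_def defect_pos_def defect_neg_def qterm_def qweight_Suc args exps(4) r1 r2 r3
    unfolding R_def[symmetric]
    using one_minus_qpower_nonzero[OF q, of n]
    \<comment> \<open>All powers become monomials in \<open>q, q ^ n, a ^ n\<close>; \<open>power_numeral_commute\<close> is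
      instantiated because it loops on numeral exponents.\<close>
    by (simp only: power_add power_mult_distrib power_numeral_mult power_numeral_commute[where n = n] power_Suc)
      (simp add: field_simps, algebra)
qed

lemma defect_Suc:
  fixes q b :: complex
  assumes q: "norm q < 1"
  shows "defect_pos q b (Suc n) - defect_neg q b n
    = b^2 * q^3 * (defect_pos q (b * q^2) n - defect_neg q (b * q^2) n)"
proof -
  define R where "R = qpoch_inf (- b * q ^ (2*n+6)) q"
  have exps: "2*n+4+1 = 2*n+5" "2*n+5+1 = 2*n+(6::nat)" "2 * Suc n + 4 = 2*n+(6::nat)"
    by simp_all
  have r5: "qpoch_inf (- b * q ^ (2*n+5)) q = (1 + b * q ^ (2*n+5)) * R"
    using qpoch_inf_neg_power_unroll[OF q, of b "2*n+5"] unfolding exps R_def .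
  have r4: "qpoch_inf (- b * q ^ (2*n+4)) q = (1 + b * q ^ (2*n+4)) * qpoch_inf (- b * q ^ (2*n+5)) q"
    using qpoch_inf_neg_power_unroll[OF q, of b "2*n+4"] unfolding exps .
  have arg: "- (b*q^2) * q ^ (2*n+4) = - b * q ^ (2*n+6)"
    by (simp add: power_add mult_ac numeral_eq_Suc)
  show ?thesis
    unfolding defect_pos_def defect_neg_def qterm_def qweight_Suc arg exps(3) r4 r5
    unfolding R_def[symmetric]
    using one_minus_qpower_nonzero[OF q, of n]
    by (simp only: power_add power_mult_distrib power_numeral_mult power_numeral_commute[where n = n] power_Suc)
      (simp add: field_simps, algebra)
qed

lemma F3_defect_eq_suminf:
  fixes q a :: complex
  assumes q: "norm q < 1"
  shows "F3_defect q a = (\<Sum>n. defect_pos q a n - defect_neg q a n)"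
proof -
  define A where "A = qterm q (a^2) (\<lambda>n. 1 - q ^ (2*n)) (\<lambda>n. - a * q ^ (2*n+2))"
  have "summable A"
    unfolding A_def
  proof (rule summable_qterm[OF q])
    show "convergent (\<lambda>n. 1 - q ^ (2*n))"
      unfolding power_numeral_mult by (rule convergentI) (rule tendsto_intros q)+
    show "norm (- a * q ^ (2*n+2)) \<le> norm a" for n
      using q by (intro norm_neg_mult_power_le) auto
  qed
  then have "(\<lambda>n. A n - A (Suc n)) sums (A 0 - 0)"
    by (intro telescope_sums' summable_LIMSEQ_zero)
  then have "(\<lambda>n. (A n - A (Suc n)) + (defect_pos q a n - defect_neg q a n))
      sums (0 + (\<Sum>n. defect_pos q a n - defect_neg q a n))"
    using q by (intro sums_add summable_sums summable_diff summable_defect_pos summable_defect_neg)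
      (simp add: A_def qterm_def)
  moreover have "(\<lambda>n. F3_term q a n - F3_term q (a*q) n - a*q*(1 + a*q) * F3_term q (a*q^2) n)
      sums F3_defect q a"
    unfolding F3_defect_def F3_eq_suminf
    using q by (intro sums_diff sums_mult summable_sums summable_F3_term)
  ultimately show ?thesis
    unfolding F3_term_decompose[OF q] A_def by (simp add: sums_iff)
qed

lemma F3_defect_rec:
  fixes q b :: complex
  assumes q: "norm q < 1"
  shows "F3_defect q b = b^2 * q^3 * F3_defect q (b * q^2)"
proof -
  have "(\<lambda>n. defect_pos q b n - defect_pos q b (Suc n)) sums (defect_pos q b 0 - 0)"
    using q by (intro telescope_sums' summable_LIMSEQ_zero summable_defect_pos)
  then have "(\<lambda>n. (defect_pos q b n - defect_pos q b (Suc n)) + (defect_pos q b (Suc n) - defect_neg q b n))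
      sums (0 + b^2 * q^3 * F3_defect q (b * q^2))"
    unfolding defect_Suc[OF q] F3_defect_eq_suminf[OF q]
    using q by (intro sums_add sums_mult summable_sums summable_diff summable_defect_pos summable_defect_neg)
      (simp add: defect_pos_def qterm_def)
  moreover have "(\<lambda>n. defect_pos q b n - defect_neg q b n) sums F3_defect q b"
    unfolding F3_defect_eq_suminf[OF q]
    using q by (intro summable_sums summable_diff summable_defect_pos summable_defect_neg)
  ultimately show ?thesis
    by (simp add: sums_iff)
qed

lemma F3_defect_eq_0:
  fixes q a :: complex
  assumes q: "norm q < 1"
  shows "F3_defect q a = 0"
proof -
  obtain C where C: "\<And>a. norm a \<le> 1 \<Longrightarrow> norm (F3 q a) \<le> C"
    using F3_bounded_on_unit_disc[OF q] by blast
  have bounded: "norm (F3_defect q b) \<le> 4 * C" if b: "norm b \<le> 1" for b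
  proof -
    have bq: "norm (b * q) \<le> 1" "norm (b * q^2) \<le> 1"
      using b q by (auto simp: norm_mult norm_power mult_le_one power_le_one)
    have "norm (1 + b * q) \<le> 2"
      using norm_triangle_ineq[of 1 "b * q"] bq(1) by simp
    then have "norm (b * q * (1 + b * q)) \<le> 1 * 2"
      unfolding norm_mult[of "b * q"] using bq(1) by (intro mult_mono) auto
    moreover have "0 \<le> C"
      using order_trans[OF norm_ge_zero C[of 0]] by simp
    ultimately have "norm (b * q * (1 + b * q) * F3 q (b * q^2)) \<le> 2 * C"
      unfolding norm_mult[of "b * q * (1 + b * q)"] using C[OF bq(2)] by (intro mult_mono) auto
    then show ?thesis
      unfolding F3_defect_def using C[OF b] C[OF bq(1)]
        norm_triangle_ineq4[of "F3 q b - F3 q (b * q)" "b * q * (1 + b * q) * F3 q (b * q^2)"]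
        norm_triangle_ineq4[of "F3 q b" "F3 q (b * q)"]
      by linarith
  qed
  have contracting: "norm (b^2 * q^3) \<le> norm q ^ 3" if "norm b \<le> 1" for b
    using that by (simp add: norm_mult norm_power mult_left_le_one_le power_le_one)
  have "norm (q^2) < 1" "norm q ^ 3 < 1"
    using q by (simp_all add: norm_power power_less_one_iff)
  then show ?thesis
    using zero_if_bounded_and_contracting[where f = "F3_defect q" and g = "\<lambda>b. b^2 * q^3"]
      F3_defect_rec[OF q] contracting bounded by blast
qed

theorem lemma9:
  fixes q a :: complex
  assumes "norm q < 1"
  shows "F1 q a = F3 q (a * q) \<and>
         F2 q a = (1 + a * q) * F2 q (a * q) \<and>
         F3 q a = F1 q a + a * q * (1 + a * q) * F1 q (a * q)"
proof (intro conjI)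
  show "F1 q a = F3 q (a * q)"
    by (rule F1_eq_F3)
  show "F2 q a = (1 + a * q) * F2 q (a * q)"
    unfolding F2_def using qpoch_inf_unroll[OF assms, of "- a * q"] by simp
  have "F1 q (a * q) = F3 q (a * q^2)"
    unfolding F1_eq_F3 by (simp add: power2_eq_square mult.assoc)
  then show "F3 q a = F1 q a + a * q * (1 + a * q) * F1 q (a * q)"
    using F3_defect_eq_0[OF assms, of a] unfolding F3_defect_def F1_eq_F3 by (simp add: algebra_simps)
qed

end
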